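(* Let $V$ be a finite-dimensional vector space over an algebraically closed field $k$, let $G = \mathrm{GL}(V)$, let $U \subseteq V$ be a subspace and fix a complement $\widetilde{U}$ to $U$ in $V$. Let $K = \mathrm{GL}(U) \le G$, embedded via the decomposition $V = U \oplus \widetilde{U}$ (acting trivially on $\widetilde{U}$). Then $\mathcal{S}_K = \{W \subseteq V \mid (W \subseteq V) \in \mathcal{F}_K\}$.
   Context: A flag in $V$ is a chain $0\neq W_1 \subsetneq \dots \subsetneq W_m \subsetneq V$, written $(W_1\subseteq\dots\subseteq W_m\subseteq V)$. For a cocharacter $\lambda$ of $G$, $P_\lambda = \{g \in G \mid \lim_{a\to 0}\lambda(a)g\lambda(a)^{-1} \text{ exists}\}$. $\mathcal{F}_K$ is the set of flags whose stabilizer in $G$ equals $P_\lambda$ for some cocharacter $\lambda$ of $K$, and $\mathcal{S}_K$ is the set of subspaces of $V$ appearing in flags from $\mathcal{F}_K$. *)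

theory Defs
  imports "HOL-Analysis.Analysis" "HOL-Computational_Algebra.Polynomial"
begin

text \<open>V is modelled as k^n, i.e. the type 'a^'n with 'a a field and 'n a finite type;
 G = GL(V) is the set of invertible matrices 'a^'n^'n acting via *v.\<close>

text \<open>A regular function on G_m = k^* (Laurent polynomial), viewed on nonzero arguments.\<close>
definition laurent_fun :: "('a::field \<Rightarrow> 'a) \<Rightarrow> bool" where
  "laurent_fun f \<longleftrightarrow> (\<exists>(p::'a poly) (m::nat). \<forall>a. a \<noteq> 0 \<longrightarrow> f a = poly p a / a ^ m)"

text \<open>A cocharacter of G: a morphism of algebraic groups G_m \<rightarrow> GL(V)
  (matrix entries regular functions on G_m, group homomorphism on k^*).\<close>
definition cocharacter :: "('a::field \<Rightarrow> 'a^'n^'n) \<Rightarrow> bool" where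
  "cocharacter lam \<longleftrightarrow>
     (\<forall>a. a \<noteq> 0 \<longrightarrow> invertible (lam a)) \<and>
     (\<forall>a b. a \<noteq> 0 \<longrightarrow> b \<noteq> 0 \<longrightarrow> lam (a * b) = lam a ** lam b) \<and>
     (\<forall>i j. laurent_fun (\<lambda>a. lam a $ i $ j))"

definition cocharacter_of :: "('a::field^'n^'n) set \<Rightarrow> ('a \<Rightarrow> 'a^'n^'n) \<Rightarrow> bool" where
  "cocharacter_of K lam \<longleftrightarrow> cocharacter lam \<and> (\<forall>a. a \<noteq> 0 \<longrightarrow> lam a \<in> K)"

text \<open>P_lambda: those g in G such that a \<mapsto> lam(a) g lam(a)^{-1} extends to a morphism
  A^1 \<rightarrow> G, i.e. its entries are polynomials in a and its value at 0 is invertible.\<close>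
definition parabolic :: "('a::field \<Rightarrow> 'a^'n^'n) \<Rightarrow> ('a^'n^'n) set" where
  "parabolic lam = {g. invertible g \<and>
     (\<exists>p :: 'n \<Rightarrow> 'n \<Rightarrow> 'a poly.
        (\<forall>a. a \<noteq> 0 \<longrightarrow> (\<forall>i j. (lam a ** g ** matrix_inv (lam a)) $ i $ j = poly (p i j) a)) \<and>
        invertible ((\<chi> i j. poly (p i j) 0) :: 'a^'n^'n))}"

definition is_flag :: "('a::field^'n) set list \<Rightarrow> bool" where
  "is_flag Ws \<longleftrightarrow> (\<forall>W \<in> set Ws. vec.subspace W) \<and> sorted_wrt (\<subset>) Ws \<and>
     (Ws \<noteq> [] \<longrightarrow> hd Ws \<noteq> {0} \<and> last Ws \<noteq> UNIV)"

definition flag_stabilizer :: "('a::field^'n) set list \<Rightarrow> ('a^'n^'n) set" where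
  "flag_stabilizer Ws = {g. invertible g \<and> (\<forall>W \<in> set Ws. (\<lambda>v. g *v v) ` W = W)}"

definition flags_K :: "('a::field^'n^'n) set \<Rightarrow> ('a^'n) set list set" where
  "flags_K K = {Ws. is_flag Ws \<and> (\<exists>lam. cocharacter_of K lam \<and> flag_stabilizer Ws = parabolic lam)}"

definition subspaces_K :: "('a::field^'n^'n) set \<Rightarrow> ('a^'n) set set" where
  "subspaces_K K = {W. \<exists>Ws \<in> flags_K K. W \<in> set Ws}"

definition GL_sub :: "('a::field^'n) set \<Rightarrow> ('a^'n) set \<Rightarrow> ('a^'n^'n) set" where
  "GL_sub U Ut = {g. invertible g \<and> (\<lambda>v. g *v v) ` U = U \<and> (\<forall>w \<in> Ut. g *v w = w)}"

end

theory Submission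
  imports Defs
begin

text \<open>
Let \<open>W\<close> be a member of a flag in \<open>\<F>\<^sub>K\<close>, whose stabilizer is \<open>P\<^sub>\<lambda>\<close> for a cocharacter
\<open>\<lambda>\<close> of \<open>K = GL(U)\<close>. Then \<open>P\<^sub>\<lambda>\<close> contains the centralizer of \<open>K\<close>, in particular every map
that is the identity on \<open>U\<close> and an arbitrary automorphism of \<open>Ut\<close>; invariance of \<open>W\<close> under
these maps forces \<open>W \<subseteq> U\<close> or \<open>Ut \<subseteq> W\<close>. Now choose a complement \<open>C\<close> of \<open>W\<close> with
\<open>Ut \<subseteq> C\<close> in the first case and \<open>C \<subseteq> U\<close> in the second, and let \<open>\<mu>(a)\<close> act by
\<open>a\<close> on \<open>W\<close> and by \<open>1\<close> on \<open>C\<close>, respectively by \<open>1\<close> on \<open>W\<close> and by \<open>a\<^sup>-\<^sup>1\<close> on \<open>C\<close>.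
Either way \<open>\<mu>\<close> is a cocharacter of \<open>K\<close>, and conjugation by \<open>\<mu>(a)\<close> multiplies the
block \<open>C \<rightarrow> W\<close> of a matrix by \<open>a\<close> and the block \<open>W \<rightarrow> C\<close> by \<open>a\<^sup>-\<^sup>1\<close>, so the limit at
\<open>0\<close> exists exactly when \<open>W\<close> is invariant: \<open>P\<^sub>\<mu>\<close> is the stabilizer of the flag \<open>(W \<subseteq> V)\<close>.
\<close>

abbreviation vec_linear :: "('a::field^'n \<Rightarrow> 'a^'n) \<Rightarrow> bool" where
  "vec_linear f \<equiv> Vector_Spaces.linear (*s) (*s) f"

lemma vec_linearI:
  assumes "\<And>x y. f (x + y) = f x + f y" and "\<And>c x. f (c *s x) = c *s f x"
  shows "vec_linear f"
  unfolding Vector_Spaces.linear_iff using assms vec.vector_space_axioms by blast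

lemma matrix_inv_unique:
  fixes A B :: "'a::field^'n^'n"
  assumes "A ** B = mat 1"
  shows "matrix_inv A = B"
proof -
  have "B ** A = mat 1" using assms matrix_left_right_inverse by blast
  then have "\<exists>X. A ** X = mat 1 \<and> X ** A = mat 1" using assms by blast
  then have inv: "A ** matrix_inv A = mat 1 \<and> matrix_inv A ** A = mat 1"
    unfolding matrix_inv_def by (rule someI_ex)
  have "matrix_inv A = matrix_inv A ** (A ** B)" using assms by simp
  also have "\<dots> = B" using inv by (simp add: matrix_mul_assoc)
  finally show ?thesis .
qed

lemma matrix_inv_right:
  fixes A :: "'a::field^'n^'n"
  assumes "invertible A"
  shows "A ** matrix_inv A = mat 1"
  using assms matrix_inv_unique unfolding invertible_def by metis

lemma matrix_mult_matrix:
  "vec_linear f \<Longrightarrow> vec_linear g \<Longrightarrow> matrix f ** matrix g = matrix (\<lambda>x. f (g x))"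
  using matrix_compose_gen[of g f] by (simp add: o_def)

lemma invertible_matrix_iff_ker:
  fixes f :: "'a::field^'n \<Rightarrow> 'a^'n"
  assumes "vec_linear f"
  shows "invertible (matrix f) \<longleftrightarrow> (\<forall>x. f x = 0 \<longrightarrow> x = 0)"
  by (simp add: invertible_left_inverse matrix_left_invertible_ker matrix_works[OF assms])

lemma invertible_image_subspace_eq:
  fixes g :: "'a::field^'n^'n"
  assumes "invertible g" and "vec.subspace W" and "(\<lambda>v. g *v v) ` W \<subseteq> W"
  shows "(\<lambda>v. g *v v) ` W = W"
proof (rule vec.subspace_dim_equal)
  have "inj ((*v) g)" using assms(1) by (rule inj_matrix_vector_mult)
  then show "vec.dim W \<le> vec.dim ((\<lambda>v. g *v v) ` W)"
    by (simp add: vec.dim_image_eq[OF matrix_vector_mul_linear_gen] inj_on_subset)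
qed (use assms in \<open>auto intro: vec.linear_subspace_image\<close>)

lemma infinite_UNIV_if_alg_closed:
  assumes "\<forall>p :: 'a::field poly. degree p > 0 \<longrightarrow> (\<exists>x. poly p x = 0)"
  shows "infinite (UNIV :: 'a set)"
proof
  assume fin: "finite (UNIV :: 'a set)"
  define q :: "'a poly" where "q = (\<Prod>a\<in>UNIV. [:-a, 1:])"
  have "degree q = card (UNIV :: 'a set)"
    by (simp add: q_def degree_prod_eq_sum_degree)
  then have "degree (q + 1) > 0" using fin by (simp add: card_gt_0_iff degree_add_eq_left)
  then obtain x where "poly (q + 1) x = 0" using assms by blast
  moreover have "poly q x = 0" by (simp add: q_def poly_prod fin)
  ultimately show False by simp
qed

section \<open>Characters of the multiplicative group\<close>

definition gm_character :: "('a::field \<Rightarrow> 'a) \<Rightarrow> bool" where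
  "gm_character s \<longleftrightarrow> laurent_fun s \<and> (\<forall>a. a \<noteq> 0 \<longrightarrow> s a \<noteq> 0) \<and>
     (\<forall>a b. a \<noteq> 0 \<longrightarrow> b \<noteq> 0 \<longrightarrow> s (a * b) = s a * s b)"

lemma gm_character_id: "gm_character (\<lambda>a. a)"
  unfolding gm_character_def laurent_fun_def by (auto intro!: exI[of _ "[:0, 1:] :: 'a poly"] exI[of _ "0 :: nat"])

lemma gm_character_one: "gm_character (\<lambda>a. 1)"
  unfolding gm_character_def laurent_fun_def by (auto intro!: exI[of _ "1 :: 'a poly"] exI[of _ "0 :: nat"])

lemma gm_character_inverse: "gm_character (\<lambda>a. 1 / a)"
  unfolding gm_character_def laurent_fun_def by (auto intro!: exI[of _ "1 :: 'a poly"] exI[of _ "1 :: nat"])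

lemma laurent_fun_lincomb:
  assumes "laurent_fun f" and "laurent_fun g"
  shows "laurent_fun (\<lambda>a. f a * c + g a * d)"
proof -
  obtain p m where f: "\<And>a. a \<noteq> 0 \<Longrightarrow> f a = poly p a / a ^ m"
    using assms(1) unfolding laurent_fun_def by blast
  obtain q n where g: "\<And>a. a \<noteq> 0 \<Longrightarrow> g a = poly q a / a ^ n"
    using assms(2) unfolding laurent_fun_def by blast
  have "f a * c + g a * d = poly (smult c (p * monom 1 n) + smult d (q * monom 1 m)) a / a ^ (m + n)"
    if "a \<noteq> 0" for a
    using that by (simp add: f g poly_monom field_simps power_add)
  then show ?thesis unfolding laurent_fun_def by blast
qed

lemma laurent_coeff_inverse_eq_0:
  fixes p :: "'a::field poly"
  assumes "infinite (UNIV :: 'a set)"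
    and "\<And>a. a \<noteq> 0 \<Longrightarrow> poly p a = x + a * y + z / a"
  shows "z = 0"
proof -
  define r where "r = pCons 0 p - [:z, x, y:]"
  have "UNIV - {0} \<subseteq> {a. poly r a = 0}"
    using assms(2) by (auto simp: r_def field_simps)
  then have "r = 0"
    using assms(1) poly_roots_finite finite_subset by (metis finite_Diff2 finite.emptyI finite.insertI)
  then show ?thesis by (metis r_def eq_iff_diff_eq_0 pCons_eq_iff)
qed

section \<open>Flags and parabolic subgroups\<close>

lemma is_flag_member:
  assumes "is_flag F" and "W \<in> set F"
  shows "vec.subspace W \<and> W \<noteq> {0} \<and> W \<noteq> UNIV"
proof -
  have "F \<noteq> []" using assms(2) by auto
  then have sorted: "sorted_wrt (\<subset>) (butlast F @ [last F])" and ends: "hd F \<noteq> {0}" "last F \<noteq> UNIV"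
    and subspaces: "\<forall>W\<in>set F. vec.subspace W"
    using assms(1) unfolding is_flag_def by auto
  have "0 \<in> hd F" using subspaces \<open>F \<noteq> []\<close> by (meson hd_in_set vec.subspace_0)
  moreover have "hd F \<subseteq> W" using assms(1,2) unfolding is_flag_def by (cases F) auto
  moreover have "W \<subseteq> last F"
  proof -
    have "W \<in> set (butlast F @ [last F])" using assms(2) \<open>F \<noteq> []\<close> by simp
    then show ?thesis using sorted unfolding sorted_wrt_append set_append by auto
  qed
  ultimately show ?thesis using ends subspaces assms(2) by blast
qed

lemma centralizer_subset_parabolic:
  assumes "cocharacter lam" and "invertible h" and "\<And>a. a \<noteq> 0 \<Longrightarrow> lam a ** h = h ** lam a"
  shows "h \<in> parabolic lam"
proof -
  have "lam a ** h ** matrix_inv (lam a) = h" if "a \<noteq> 0" for a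
  proof -
    have "invertible (lam a)" using assms(1) that unfolding cocharacter_def by blast
    then show ?thesis using assms(3)[OF that] by (metis matrix_mul_assoc matrix_mul_rid matrix_inv_right)
  qed
  moreover have "(\<chi> i j. poly [:h $ i $ j:] 0) = h" by (simp add: vec_eq_iff)
  ultimately show ?thesis
    unfolding parabolic_def using assms(2) by (auto intro!: exI[of _ "\<lambda>i j. [:h $ i $ j:]"])
qed

lemma flags_K_member_stable_under_centralizer:
  assumes "F \<in> flags_K K" and "W \<in> set F"
    and "invertible h" and "\<And>k. k \<in> K \<Longrightarrow> k ** h = h ** k"
  shows "(\<lambda>v. h *v v) ` W = W"
proof -
  obtain lam where lam: "cocharacter_of K lam" "flag_stabilizer F = parabolic lam"
    using assms(1) unfolding flags_K_def by blast
  then have "h \<in> parabolic lam"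
    using assms(3,4) by (intro centralizer_subset_parabolic) (auto simp: cocharacter_of_def)
  then show ?thesis using lam(2) assms(2) unfolding flag_stabilizer_def by blast
qed

section \<open>Direct sum decompositions\<close>

lemma subspace_complement_exists:
  fixes X Y :: "('a::field^'n) set"
  assumes "vec.subspace X" and "vec.subspace Y" and "X \<subseteq> Y"
  obtains C where "vec.subspace C" "C \<subseteq> Y" "X \<inter> C = {0}" "\<And>v. v \<in> Y \<Longrightarrow> \<exists>x\<in>X. \<exists>c\<in>C. v = x + c"
proof -
  obtain BX where BX: "BX \<subseteq> X" "vec.independent BX" "X \<subseteq> vec.span BX"
    using vec.maximal_independent_subset by blast
  obtain BY where BY: "BX \<subseteq> BY" "BY \<subseteq> Y" "vec.independent BY" "Y \<subseteq> vec.span BY"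
    using vec.maximal_independent_subset_extend[of BX Y] BX assms(3) by blast
  define C where "C = vec.span (BY - BX)"
  have span_BX: "vec.span BX = X" using BX assms(1) vec.span_minimal by blast
  have "C \<subseteq> Y" unfolding C_def using BY(2) assms(2) vec.span_minimal by blast
  moreover have "x = 0" if "x \<in> X" "x \<in> C" for x
  proof -
    define f where "f = vec.construct BY (\<lambda>b. if b \<in> BX then b else 0)"
    have f: "vec_linear f" unfolding f_def using vec.linear_construct BY(3) by blast
    have f_basis: "f b = (if b \<in> BX then b else 0)" if "b \<in> BY" for b
      unfolding f_def using vec.construct_basis[OF BY(3) that] .
    have "f x = id x"
      by (rule vec.linear_eq_on[OF f vec.linear_id, of x BX]) (use that BX BY f_basis in auto)
    moreover have "f x = 0"
      by (rule vec.linear_eq_on[OF f vec.linear_zero, of x "BY - BX"]) (use that f_basis C_def in auto)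
    ultimately show ?thesis by simp
  qed
  then have "X \<inter> C = {0}" using assms(1) vec.subspace_0 C_def vec.span_zero by blast
  moreover have "\<exists>x\<in>X. \<exists>c\<in>C. v = x + c" if "v \<in> Y" for v
  proof -
    have "v \<in> vec.span (BX \<union> (BY - BX))" using that BY by (metis Un_Diff_cancel sup.absorb2 subsetD)
    then show ?thesis unfolding vec.span_Un C_def span_BX by blast
  qed
  ultimately show ?thesis using that unfolding C_def by blast
qed

locale direct_sum =
  fixes A B :: "('a::field^'n) set"
  assumes subspace_A: "vec.subspace A" and subspace_B: "vec.subspace B"
    and inter_eq_0: "A \<inter> B = {0}" and sum_eq_UNIV: "\<And>v. \<exists>a\<in>A. \<exists>b\<in>B. v = a + b"
begin

definition proj1 :: "'a^'n \<Rightarrow> 'a^'n" where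
  "proj1 v = (SOME a. a \<in> A \<and> v - a \<in> B)"

definition proj2 :: "'a^'n \<Rightarrow> 'a^'n" where
  "proj2 v = v - proj1 v"

lemma proj1_in: "proj1 v \<in> A" and proj2_in: "proj2 v \<in> B"
proof -
  obtain a b where "a \<in> A" "b \<in> B" "v = a + b" using sum_eq_UNIV by blast
  then have "\<exists>a. a \<in> A \<and> v - a \<in> B" by (intro exI[of _ a]) simp
  then have "proj1 v \<in> A \<and> v - proj1 v \<in> B" unfolding proj1_def by (rule someI_ex)
  then show "proj1 v \<in> A" "proj2 v \<in> B" unfolding proj2_def by auto
qed

lemma proj1_add_proj2 [simp]: "proj1 v + proj2 v = v"
  by (simp add: proj2_def)

lemma add_in_A_B_eq_0_iff:
  assumes "a \<in> A" and "b \<in> B"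
  shows "a + b = 0 \<longleftrightarrow> a = 0 \<and> b = 0"
proof
  assume "a + b = 0"
  then have "a = - b" by (simp add: eq_neg_iff_add_eq_0)
  then have "a \<in> A \<inter> B" using assms subspace_B vec.subspace_neg by fastforce
  then show "a = 0 \<and> b = 0" using inter_eq_0 \<open>a = - b\<close> by auto
qed simp

lemma proj_add:
  assumes "a \<in> A" and "b \<in> B"
  shows "proj1 (a + b) = a" and "proj2 (a + b) = b"
proof -
  have "(proj1 (a + b) - a) + (proj2 (a + b) - b) = 0"
    using proj1_add_proj2[of "a + b"] by (simp add: algebra_simps)
  moreover have "proj1 (a + b) - a \<in> A" "proj2 (a + b) - b \<in> B"
    using assms proj1_in proj2_in subspace_A subspace_B vec.subspace_diff by blast+
  ultimately show "proj1 (a + b) = a" "proj2 (a + b) = b" by (simp_all add: add_in_A_B_eq_0_iff)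
qed

lemma proj1_A: "a \<in> A \<Longrightarrow> proj1 a = a" and proj2_A: "a \<in> A \<Longrightarrow> proj2 a = 0"
  using proj_add[of a 0] subspace_B vec.subspace_0 by auto

lemma proj1_B: "b \<in> B \<Longrightarrow> proj1 b = 0" and proj2_B: "b \<in> B \<Longrightarrow> proj2 b = b"
  using proj_add[of 0 b] subspace_A vec.subspace_0 by auto

lemma proj1_add [simp]: "proj1 (x + y) = proj1 x + proj1 y"
  and proj2_add [simp]: "proj2 (x + y) = proj2 x + proj2 y"
proof -
  have "x + y = (proj1 x + proj1 y) + (proj2 x + proj2 y)"
    by (metis proj1_add_proj2 add.assoc add.left_commute)
  then show "proj1 (x + y) = proj1 x + proj1 y" "proj2 (x + y) = proj2 x + proj2 y"
    using proj_add proj1_in proj2_in subspace_A subspace_B vec.subspace_add by metis+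
qed

lemma proj1_scale [simp]: "proj1 (c *s x) = c *s proj1 x"
  and proj2_scale [simp]: "proj2 (c *s x) = c *s proj2 x"
proof -
  have "c *s x = c *s proj1 x + c *s proj2 x"
    by (metis proj1_add_proj2 vector_add_ldistrib)
  then show "proj1 (c *s x) = c *s proj1 x" "proj2 (c *s x) = c *s proj2 x"
    using proj_add proj1_in proj2_in subspace_A subspace_B vec.subspace_scale by metis+
qed

section \<open>Weight cocharacters\<close>

definition weight_map :: "'a \<Rightarrow> 'a \<Rightarrow> 'a^'n \<Rightarrow> 'a^'n" where
  "weight_map x y v = x *s proj1 v + y *s proj2 v"

definition weight_matrix :: "'a \<Rightarrow> 'a \<Rightarrow> 'a^'n^'n" where
  "weight_matrix x y = matrix (weight_map x y)"

lemma linear_weight_map: "vec_linear (weight_map x y)"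
  by (rule vec_linearI) (simp_all add: weight_map_def mult.commute add_ac)

lemma weight_map_weight_map: "weight_map x y (weight_map x' y' v) = weight_map (x * x') (y * y') v"
  by (simp add: weight_map_def proj1_A proj2_A proj1_B proj2_B proj1_in proj2_in)

lemma weight_map_1_1: "weight_map 1 1 = id"
  by (simp add: weight_map_def fun_eq_iff)

lemma weight_matrix_apply: "weight_matrix x y *v v = weight_map x y v"
  unfolding weight_matrix_def by (rule matrix_works[OF linear_weight_map])

lemma weight_matrix_mult: "weight_matrix x y ** weight_matrix x' y' = weight_matrix (x * x') (y * y')"
  unfolding weight_matrix_def matrix_mult_matrix[OF linear_weight_map linear_weight_map]
  by (simp add: weight_map_weight_map)

lemma weight_matrix_inverse:
  assumes "x \<noteq> 0" and "y \<noteq> 0"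
  shows "weight_matrix x y ** weight_matrix (1 / x) (1 / y) = mat 1"
proof -
  have "weight_matrix x y ** weight_matrix (1 / x) (1 / y) = weight_matrix 1 1"
    using assms by (simp add: weight_matrix_mult)
  then show ?thesis by (simp add: weight_matrix_def weight_map_1_1 matrix_id_mat_1)
qed

lemma invertible_weight_matrix: "x \<noteq> 0 \<Longrightarrow> y \<noteq> 0 \<Longrightarrow> invertible (weight_matrix x y)"
  using weight_matrix_inverse invertible_right_inverse by blast

lemma weight_matrix_conj:
  assumes "x \<noteq> 0" and "y \<noteq> 0"
  shows "weight_matrix x y ** g ** matrix_inv (weight_matrix x y) =
    matrix (\<lambda>v. proj1 (g *v proj1 v) + proj2 (g *v proj2 v)
               + (x / y) *s proj1 (g *v proj2 v) + (y / x) *s proj2 (g *v proj1 v))"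
proof -
  have g: "vec_linear (\<lambda>v. weight_map x y (g *v v))"
    by (rule vec_linearI) (simp_all add: linear_weight_map vec.linear_add vec.linear_scale
        matrix_vector_right_distrib vec.scale)
  have "weight_matrix x y ** g ** matrix_inv (weight_matrix x y)
      = matrix (\<lambda>v. weight_map x y (g *v weight_map (1 / x) (1 / y) v))"
    unfolding matrix_inv_unique[OF weight_matrix_inverse[OF assms]] unfolding weight_matrix_def
    using matrix_mult_matrix[OF linear_weight_map matrix_vector_mul_linear_gen, of x y g]
      matrix_mult_matrix[OF g linear_weight_map]
    by simp
  also have "\<dots> = matrix (\<lambda>v. proj1 (g *v proj1 v) + proj2 (g *v proj2 v)
               + (x / y) *s proj1 (g *v proj2 v) + (y / x) *s proj2 (g *v proj1 v))"
    using assms by (simp add: weight_map_def vec.scale algebra_simps)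
  finally show ?thesis .
qed

lemma weight_cocharacter_conj:
  assumes "a \<noteq> 0" and "t a \<noteq> 0" and "s a = a * t a"
  shows "weight_matrix (s a) (t a) ** g ** matrix_inv (weight_matrix (s a) (t a)) =
    matrix (\<lambda>v. proj1 (g *v proj1 v) + proj2 (g *v proj2 v)
               + a *s proj1 (g *v proj2 v) + (1 / a) *s proj2 (g *v proj1 v))"
  using assms by (simp add: weight_matrix_conj)

lemma invertible_block_diagonal_part:
  assumes g: "invertible g" and gA: "(\<lambda>v. g *v v) ` A = A"
  shows "invertible (matrix (\<lambda>v. proj1 (g *v proj1 v) + proj2 (g *v proj2 v)))"
proof -
  have N: "vec_linear (\<lambda>v. proj1 (g *v proj1 v) + proj2 (g *v proj2 v))"
    by (rule vec_linearI) (simp_all add: matrix_vector_right_distrib vec.scale)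
  have inj: "inj ((*v) g)" using g by (rule inj_matrix_vector_mult)
  have "x = 0" if "proj1 (g *v proj1 x) + proj2 (g *v proj2 x) = 0" for x
  proof -
    have gA_in: "g *v proj1 x \<in> A" using gA proj1_in by blast
    then have "g *v proj1 x = 0" and "proj2 (g *v proj2 x) = 0"
      using that proj1_A by (auto simp: add_in_A_B_eq_0_iff proj1_in proj2_in)
    from \<open>g *v proj1 x = 0\<close> have "proj1 x = 0"
      using injD[OF inj, of "proj1 x" 0] by simp
    from \<open>proj2 (g *v proj2 x) = 0\<close> have "g *v proj2 x \<in> (\<lambda>v. g *v v) ` A"
      using gA proj1_in[of "g *v proj2 x"] proj1_add_proj2[of "g *v proj2 x"] by auto
    then have "proj2 x \<in> A" using inj by (simp add: inj_image_mem_iff)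
    then have "proj2 x = 0" using proj2_in inter_eq_0 by blast
    then show "x = 0" using \<open>proj1 x = 0\<close> proj1_add_proj2[of x] by simp
  qed
  then show ?thesis using invertible_matrix_iff_ker[OF N] by blast
qed

lemma stabilizer_subset_parabolic_weight:
  assumes st: "\<And>a. a \<noteq> 0 \<Longrightarrow> t a \<noteq> 0 \<and> s a = a * t a"
    and g: "invertible g" and gA: "(\<lambda>v. g *v v) ` A = A"
  shows "g \<in> parabolic (\<lambda>a. weight_matrix (s a) (t a))"
proof -
  define N where "N v = proj1 (g *v proj1 v) + proj2 (g *v proj2 v)" for v
  define M where "M v = proj1 (g *v proj2 v)" for v
  define p where "p i j = [:N (axis j 1) $ i, M (axis j 1) $ i:]" for i j
  have "(\<chi> i j. poly (p i j) 0) = matrix N" by (simp add: p_def matrix_def)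
  then have "invertible ((\<chi> i j. poly (p i j) 0) :: 'a^'n^'n)"
    using invertible_block_diagonal_part[OF g gA] unfolding N_def by simp
  moreover have "(weight_matrix (s a) (t a) ** g ** matrix_inv (weight_matrix (s a) (t a))) $ i $ j
      = poly (p i j) a" if "a \<noteq> 0" for a i j
  proof -
    have "proj2 (g *v proj1 v) = 0" for v using gA proj1_in proj2_A by blast
    moreover have "weight_matrix (s a) (t a) ** g ** matrix_inv (weight_matrix (s a) (t a))
        = matrix (\<lambda>v. proj1 (g *v proj1 v) + proj2 (g *v proj2 v)
               + a *s proj1 (g *v proj2 v) + (1 / a) *s proj2 (g *v proj1 v))"
      using that st[OF that] by (intro weight_cocharacter_conj) auto
    ultimately have "weight_matrix (s a) (t a) ** g ** matrix_inv (weight_matrix (s a) (t a))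
        = matrix (\<lambda>v. N v + a *s M v)"
      by (simp add: N_def M_def)
    then show ?thesis by (simp add: matrix_def p_def)
  qed
  ultimately show ?thesis unfolding parabolic_def using g by blast
qed

lemma parabolic_weight_subset_stabilizer:
  assumes inf: "infinite (UNIV :: 'a set)"
    and st: "\<And>a. a \<noteq> 0 \<Longrightarrow> t a \<noteq> 0 \<and> s a = a * t a"
    and g: "g \<in> parabolic (\<lambda>a. weight_matrix (s a) (t a))"
  shows "invertible g \<and> (\<lambda>v. g *v v) ` A = A"
proof -
  obtain p where g_inv: "invertible g" and p: "\<And>a i j. a \<noteq> 0 \<Longrightarrow>
      (weight_matrix (s a) (t a) ** g ** matrix_inv (weight_matrix (s a) (t a))) $ i $ j = poly (p i j) a"
    using g unfolding parabolic_def by blast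
  define R where "R v = proj2 (g *v proj1 v)" for v
  have R: "vec_linear R"
    by (rule vec_linearI) (simp_all add: R_def matrix_vector_right_distrib vec.scale)
  have "R (axis j 1) $ i = 0" for i j
  proof (rule laurent_coeff_inverse_eq_0[OF inf])
    fix a :: 'a assume "a \<noteq> 0"
    then have "weight_matrix (s a) (t a) ** g ** matrix_inv (weight_matrix (s a) (t a))
        = matrix (\<lambda>v. proj1 (g *v proj1 v) + proj2 (g *v proj2 v)
               + a *s proj1 (g *v proj2 v) + (1 / a) *s R v)"
      using st[OF \<open>a \<noteq> 0\<close>] unfolding R_def by (intro weight_cocharacter_conj) auto
    then show "poly (p i j) a = (proj1 (g *v proj1 (axis j 1)) + proj2 (g *v proj2 (axis j 1))) $ i
        + a * proj1 (g *v proj2 (axis j 1)) $ i + R (axis j 1) $ i / a"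
      using p[OF \<open>a \<noteq> 0\<close>, of i j] by (simp add: matrix_def)
  qed
  then have "matrix R = 0" by (simp add: matrix_def vec_eq_iff)
  then have R_0: "R v = 0" for v using matrix_works[OF R, of v] by simp
  have "g *v v \<in> A" if "v \<in> A" for v
  proof -
    have "proj2 (g *v v) = 0" using R_0[of v] that by (simp add: R_def proj1_A)
    then show ?thesis by (metis add.right_neutral proj1_add_proj2 proj1_in)
  qed
  then have "(\<lambda>v. g *v v) ` A = A"
    by (intro invertible_image_subspace_eq[OF g_inv subspace_A] image_subsetI)
  then show ?thesis using g_inv by blast
qed

lemma parabolic_weight_eq_flag_stabilizer:
  assumes "infinite (UNIV :: 'a set)" and "\<And>a. a \<noteq> 0 \<Longrightarrow> t a \<noteq> 0 \<and> s a = a * t a"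
  shows "parabolic (\<lambda>a. weight_matrix (s a) (t a)) = flag_stabilizer [A]"
proof (intro set_eqI iffI)
  fix g assume "g \<in> parabolic (\<lambda>a. weight_matrix (s a) (t a))"
  then show "g \<in> flag_stabilizer [A]"
    using parabolic_weight_subset_stabilizer[OF assms] unfolding flag_stabilizer_def by simp
next
  fix g assume "g \<in> flag_stabilizer [A]"
  then show "g \<in> parabolic (\<lambda>a. weight_matrix (s a) (t a))"
    using stabilizer_subset_parabolic_weight[OF assms(2)] unfolding flag_stabilizer_def by simp
qed

lemma cocharacter_weight:
  assumes s: "gm_character s" and t: "gm_character t"
  shows "cocharacter (\<lambda>a. weight_matrix (s a) (t a))"
  unfolding cocharacter_def
proof (intro conjI allI impI)
  show "invertible (weight_matrix (s a) (t a))" if "a \<noteq> 0" for a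
    using s t that by (simp add: gm_character_def invertible_weight_matrix)
  show "weight_matrix (s (a * b)) (t (a * b)) = weight_matrix (s a) (t a) ** weight_matrix (s b) (t b)"
    if "a \<noteq> 0" "b \<noteq> 0" for a b
    using s t that by (simp add: gm_character_def weight_matrix_mult)
  show "laurent_fun (\<lambda>a. weight_matrix (s a) (t a) $ i $ j)" for i j
  proof -
    have "laurent_fun (\<lambda>a. s a * proj1 (axis j 1) $ i + t a * proj2 (axis j 1) $ i)"
      using s t unfolding gm_character_def by (intro laurent_fun_lincomb) simp_all
    then show ?thesis by (simp add: weight_matrix_def matrix_def weight_map_def)
  qed
qed

lemma weight_matrix_in_GL_sub:
  assumes "x \<noteq> 0" and "y \<noteq> 0"
    and U: "vec.subspace U" and proj1_U: "\<And>u. u \<in> U \<Longrightarrow> proj1 u \<in> U"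
    and fix_U': "\<And>w. w \<in> U' \<Longrightarrow> weight_map x y w = w"
  shows "weight_matrix x y \<in> GL_sub U U'"
proof -
  have inv: "invertible (weight_matrix x y)" using assms(1,2) by (rule invertible_weight_matrix)
  have "weight_map x y u \<in> U" if "u \<in> U" for u
  proof -
    have "proj2 u \<in> U"
      unfolding proj2_def by (rule vec.subspace_diff[OF U that proj1_U[OF that]])
    then show ?thesis unfolding weight_map_def
      by (intro vec.subspace_add[OF U] vec.subspace_scale[OF U] proj1_U that)
  qed
  then have "(\<lambda>v. weight_matrix x y *v v) ` U = U"
    by (intro invertible_image_subspace_eq[OF inv U]) (auto simp: weight_matrix_apply)
  then show ?thesis unfolding GL_sub_def using inv fix_U' by (simp add: weight_matrix_apply)
qed

section \<open>Subspaces occurring in flags of \<open>\<F>\<^sub>K\<close>\<close>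

definition extend_by_id :: "('a^'n \<Rightarrow> 'a^'n) \<Rightarrow> 'a^'n \<Rightarrow> 'a^'n" where
  "extend_by_id S v = proj1 v + S (proj2 v)"

lemma linear_extend_by_id: "vec_linear S \<Longrightarrow> vec_linear (extend_by_id S)"
  by (rule vec_linearI) (simp_all add: extend_by_id_def vec.linear_add vec.linear_scale)

lemma invertible_matrix_extend_by_id:
  assumes S: "vec_linear S" and S_B: "\<And>x. x \<in> B \<Longrightarrow> S x \<in> B" and inj: "inj_on S B"
  shows "invertible (matrix (extend_by_id S))"
  unfolding invertible_matrix_iff_ker[OF linear_extend_by_id[OF S]]
proof (intro allI impI)
  fix v assume "extend_by_id S v = 0"
  then have "proj1 v = 0" and "S (proj2 v) = S 0"
    using add_in_A_B_eq_0_iff[OF proj1_in S_B[OF proj2_in]] vec.linear_0[OF S]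
    by (simp_all add: extend_by_id_def)
  moreover have "proj2 v = 0"
    using inj_onD[OF inj \<open>S (proj2 v) = S 0\<close> proj2_in] subspace_B vec.subspace_0 by blast
  ultimately show "v = 0" using proj1_add_proj2[of v] by simp
qed

lemma GL_sub_commute_extend_by_id:
  assumes S: "vec_linear S" and S_B: "\<And>x. x \<in> B \<Longrightarrow> S x \<in> B" and k: "k \<in> GL_sub A B"
  shows "k ** matrix (extend_by_id S) = matrix (extend_by_id S) ** k"
proof -
  have k_A: "k *v a \<in> A" if "a \<in> A" for a using k that unfolding GL_sub_def by blast
  have k_B: "k *v b = b" if "b \<in> B" for b using k that unfolding GL_sub_def by blast
  have "k *v extend_by_id S v = extend_by_id S (k *v v)" for v
  proof -
    have "k *v v = k *v proj1 v + proj2 v"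
      by (metis proj1_add_proj2 matrix_vector_right_distrib k_B proj2_in)
    then have "proj1 (k *v v) = k *v proj1 v" and "proj2 (k *v v) = proj2 v"
      using proj_add k_A proj1_in proj2_in by metis+
    then show ?thesis
      by (simp add: extend_by_id_def matrix_vector_right_distrib k_B S_B proj2_in)
  qed
  then show ?thesis
    by (simp add: matrix_eq matrix_vector_mul_assoc[symmetric] matrix_works[OF linear_extend_by_id[OF S]])
qed

lemma flags_K_member_stable_extend_by_id:
  assumes "F \<in> flags_K (GL_sub A B)" and "W \<in> set F"
    and S: "vec_linear S" and S_B: "\<And>x. x \<in> B \<Longrightarrow> S x \<in> B" and inj: "inj_on S B"
  shows "extend_by_id S ` W = W"
  using flags_K_member_stable_under_centralizer[OF assms(1,2) invertible_matrix_extend_by_id[OF S S_B inj]]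
    GL_sub_commute_extend_by_id[OF S S_B]
  by (simp add: matrix_works[OF linear_extend_by_id[OF S]])

lemma flags_K_member_meets_B:
  assumes inf: "infinite (UNIV :: 'a set)"
    and F: "F \<in> flags_K (GL_sub A B)" and W: "W \<in> set F" and not_sub: "\<not> W \<subseteq> A"
  obtains w where "w \<in> W" "w \<in> B" "w \<noteq> 0"
proof -
  have sW: "vec.subspace W" using F W is_flag_member unfolding flags_K_def by blast
  obtain v where v: "v \<in> W" "v \<notin> A" using not_sub by blast
  then have "proj2 v \<noteq> 0" using proj1_in[of v] proj1_add_proj2[of v] by (metis add.right_neutral)
  obtain c :: 'a where c: "c \<noteq> 0" "c \<noteq> 1"
    using inf finite_subset[of UNIV "{0, 1}"] by blast
  have "extend_by_id (\<lambda>x. c *s x) ` W = W"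
    using c(1) by (intro flags_K_member_stable_extend_by_id[OF F W])
      (auto intro: vec_linearI simp: subspace_B vec.subspace_scale inj_on_def)
  then have "extend_by_id (\<lambda>x. c *s x) v - v \<in> W"
    using v(1) sW vec.subspace_diff by blast
  moreover have "extend_by_id (\<lambda>x. c *s x) v - v = (c - 1) *s proj2 v"
    by (subst (2) proj1_add_proj2[of v, symmetric]) (simp add: extend_by_id_def algebra_simps)
  ultimately have "(1 / (c - 1)) *s ((c - 1) *s proj2 v) \<in> W"
    using sW vec.subspace_scale by metis
  moreover have "(1 / (c - 1)) * (c - 1) = 1" using c(2) by simp
  ultimately have "proj2 v \<in> W" by (metis vector_smult_assoc vector_smult_lid)
  then show ?thesis using that proj2_in \<open>proj2 v \<noteq> 0\<close> by blast
qed

lemma flags_K_member_contains_B: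
  assumes F: "F \<in> flags_K (GL_sub A B)" and W: "W \<in> set F"
    and w: "w \<in> W" "w \<in> B" "w \<noteq> 0"
  shows "B \<subseteq> W"
proof -
  have sW: "vec.subspace W" using F W is_flag_member unfolding flags_K_def by blast
  obtain BB where BB: "w \<in> BB" "BB \<subseteq> B" "vec.independent BB" "B \<subseteq> vec.span BB"
    using vec.maximal_independent_subset_extend[of "{w}" B] w by (auto simp: vec.independent_insert)
  have "b \<in> W" if b: "b \<in> BB" for b
  proof -
    define S where "S = vec.construct BB (\<lambda>x. if x = w then b else if x = b then w else x)"
    have S: "vec_linear S" unfolding S_def using vec.linear_construct BB(3) by blast
    have S_basis: "S x = (if x = w then b else if x = b then w else x)" if "x \<in> BB" for x
      unfolding S_def using vec.construct_basis[OF BB(3) that] .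
    have span_BB: "vec.span BB = B" using BB subspace_B vec.span_minimal by blast
    have S_B: "S x \<in> B" if "x \<in> B" for x
    proof -
      have "S ` BB \<subseteq> BB" using S_basis b BB(1) by auto
      then have "S ` vec.span BB \<subseteq> vec.span BB"
        by (metis vec.linear_span_image[OF S] vec.span_mono)
      then show ?thesis using that span_BB by blast
    qed
    have "S (S x) = x" if "x \<in> B" for x
      using vec.linear_eq_on[OF Vector_Spaces.linear_compose[OF S S] vec.linear_id, of x BB] that span_BB
        S_basis b BB(1) by auto
    then have "inj_on S B" by (metis inj_onI)
    then have "extend_by_id S ` W = W"
      by (intro flags_K_member_stable_extend_by_id[OF F W S S_B])
    then have "extend_by_id S w \<in> W" using w(1) by blast
    moreover have "extend_by_id S w = b"
      using w(2) BB(1) S_basis by (simp add: extend_by_id_def proj1_B proj2_B)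
    ultimately show ?thesis by simp
  qed
  then show ?thesis using BB(4) sW vec.span_minimal by blast
qed

lemma flags_K_member_cases:
  assumes "infinite (UNIV :: 'a set)" and "F \<in> flags_K (GL_sub A B)" and "W \<in> set F"
  shows "W \<subseteq> A \<or> B \<subseteq> W"
  using flags_K_member_meets_B[OF assms] flags_K_member_contains_B[OF assms(2,3)] by blast

lemma complement_containing_B:
  assumes W: "vec.subspace W" "W \<subseteq> A"
  obtains C where "direct_sum W C" and "B \<subseteq> C"
proof -
  obtain C' where C': "vec.subspace C'" "C' \<subseteq> A" "W \<inter> C' = {0}"
      "\<And>v. v \<in> A \<Longrightarrow> \<exists>w\<in>W. \<exists>c\<in>C'. v = w + c"
    using subspace_complement_exists[OF W(1) subspace_A W(2)] by blast
  define C where "C = vec.span (C' \<union> B)"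
  have C: "C = {c + b | c b. c \<in> C' \<and> b \<in> B}"
  proof -
    have "vec.span C' = C'" "vec.span B = B" using C'(1) subspace_B vec.span_eq_iff by auto
    then show ?thesis by (simp only: C_def vec.span_Un)
  qed
  have B_C: "B \<subseteq> C" unfolding C_def by (meson Un_upper2 vec.span_superset subset_trans)
  have "direct_sum W C"
  proof
    show "vec.subspace W" by fact
    show "vec.subspace C" unfolding C_def by (rule vec.subspace_span)
    have "z = 0" if "z \<in> W" "z \<in> C" for z
    proof -
      obtain c b where cb: "c \<in> C'" "b \<in> B" "z = c + b" using \<open>z \<in> C\<close> C by blast
      then have "b = z - c" by simp
      also have "\<dots> \<in> A" using that W(2) cb(1) C'(2) subspace_A vec.subspace_diff by blast
      finally have "b = 0" using cb(2) inter_eq_0 by blast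
      then show "z = 0" using C'(3) cb that by auto
    qed
    then show "W \<inter> C = {0}" using W(1) B_C subspace_B vec.subspace_0 by blast
    show "\<exists>w\<in>W. \<exists>c\<in>C. v = w + c" for v
    proof -
      obtain a b where "a \<in> A" "b \<in> B" "v = a + b" using sum_eq_UNIV by blast
      moreover obtain w c where "w \<in> W" "c \<in> C'" "a = w + c" using C'(4) \<open>a \<in> A\<close> by blast
      ultimately show ?thesis using C by (metis (mono_tags, lifting) add.assoc mem_Collect_eq)
    qed
  qed
  then show ?thesis using that B_C by blast
qed

lemma complement_inside_A:
  assumes W: "vec.subspace W" "B \<subseteq> W"
  obtains C where "direct_sum W C" and "C \<subseteq> A"
proof -
  obtain C where C: "vec.subspace C" "C \<subseteq> A" "(W \<inter> A) \<inter> C = {0}"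
      "\<And>v. v \<in> A \<Longrightarrow> \<exists>w\<in>W \<inter> A. \<exists>c\<in>C. v = w + c"
    using subspace_complement_exists[OF vec.subspace_inter[OF W(1) subspace_A] subspace_A] by blast
  have "direct_sum W C"
  proof
    show "vec.subspace W" "vec.subspace C" by fact+
    show "W \<inter> C = {0}" using C(2,3) by blast
    show "\<exists>w\<in>W. \<exists>c\<in>C. v = w + c" for v
    proof -
      obtain a b where "a \<in> A" "b \<in> B" "v = a + b" using sum_eq_UNIV by blast
      moreover obtain w c where "w \<in> W" "c \<in> C" "a = w + c" using C(4) \<open>a \<in> A\<close> by blast
      moreover have "w + b \<in> W" using \<open>w \<in> W\<close> \<open>b \<in> B\<close> W vec.subspace_add by blast
      ultimately show ?thesis by (metis add.assoc add.commute)
    qed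
  qed
  then show ?thesis using that C(2) by blast
qed

lemma flag_cocharacter_subspace_of_A:
  assumes inf: "infinite (UNIV :: 'a set)" and W: "vec.subspace W" "W \<subseteq> A"
  shows "\<exists>lam. cocharacter_of (GL_sub A B) lam \<and> flag_stabilizer [W] = parabolic lam"
proof -
  obtain C where WC: "direct_sum W C" and B_C: "B \<subseteq> C" using complement_containing_B[OF W] .
  interpret WC: direct_sum W C by (rule WC)
  have "cocharacter_of (GL_sub A B) (\<lambda>a. WC.weight_matrix a 1)"
    unfolding cocharacter_of_def
  proof (intro conjI allI impI)
    show "cocharacter (\<lambda>a. WC.weight_matrix a 1)"
      using WC.cocharacter_weight[OF gm_character_id gm_character_one] .
    show "WC.weight_matrix a 1 \<in> GL_sub A B" if "a \<noteq> 0" for a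
      by (rule WC.weight_matrix_in_GL_sub)
        (use that W(2) WC.proj1_in B_C in \<open>auto simp: WC.weight_map_def WC.proj1_B WC.proj2_B subspace_A\<close>)
  qed
  moreover have "flag_stabilizer [W] = parabolic (\<lambda>a. WC.weight_matrix a 1)"
    using WC.parabolic_weight_eq_flag_stabilizer[OF inf, where s = "\<lambda>a. a" and t = "\<lambda>a. 1"] by simp
  ultimately show ?thesis by blast
qed

lemma flag_cocharacter_superspace_of_B:
  assumes inf: "infinite (UNIV :: 'a set)" and W: "vec.subspace W" "B \<subseteq> W"
  shows "\<exists>lam. cocharacter_of (GL_sub A B) lam \<and> flag_stabilizer [W] = parabolic lam"
proof -
  obtain C where WC: "direct_sum W C" and C_A: "C \<subseteq> A" using complement_inside_A[OF W] .
  interpret WC: direct_sum W C by (rule WC)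
  have "cocharacter_of (GL_sub A B) (\<lambda>a. WC.weight_matrix 1 (1 / a))"
    unfolding cocharacter_of_def
  proof (intro conjI allI impI)
    show "cocharacter (\<lambda>a. WC.weight_matrix 1 (1 / a))"
      using WC.cocharacter_weight[OF gm_character_one gm_character_inverse] .
    have "WC.proj1 u \<in> A" if "u \<in> A" for u
    proof -
      have "WC.proj1 u = u - WC.proj2 u" by (simp add: WC.proj2_def)
      then show ?thesis using that WC.proj2_in C_A subspace_A vec.subspace_diff by (metis subsetD)
    qed
    then show "WC.weight_matrix 1 (1 / a) \<in> GL_sub A B" if "a \<noteq> 0" for a
      by (intro WC.weight_matrix_in_GL_sub)
        (use that W(2) in \<open>auto simp: WC.weight_map_def WC.proj1_A WC.proj2_A subspace_A\<close>)
  qed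
  moreover have "flag_stabilizer [W] = parabolic (\<lambda>a. WC.weight_matrix 1 (1 / a))"
    using WC.parabolic_weight_eq_flag_stabilizer[OF inf, where s = "\<lambda>a. 1" and t = "\<lambda>a. 1 / a"] by simp
  ultimately show ?thesis by blast
qed

end

theorem lemma4p5:
  fixes U Ut :: "('a::field ^ 'n) set"
  assumes alg_closed: "\<forall>p :: 'a poly. degree p > 0 \<longrightarrow> (\<exists>x. poly p x = 0)"
    and "vec.subspace U" and "vec.subspace Ut"
    and "U \<inter> Ut = {0}" and "\<forall>v. \<exists>u \<in> U. \<exists>w \<in> Ut. v = u + w"
  shows "subspaces_K (GL_sub U Ut) = {W. [W] \<in> flags_K (GL_sub U Ut)}"
proof -
  interpret direct_sum U Ut using assms(2-5) by unfold_locales simp_all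
  have inf: "infinite (UNIV :: 'a set)" using alg_closed by (rule infinite_UNIV_if_alg_closed)
  have "[W] \<in> flags_K (GL_sub U Ut)" if W_in: "W \<in> subspaces_K (GL_sub U Ut)" for W
  proof -
    obtain F where F: "F \<in> flags_K (GL_sub U Ut)" "W \<in> set F"
      using W_in unfolding subspaces_K_def by blast
    then have W: "vec.subspace W" "W \<noteq> {0}" "W \<noteq> UNIV"
      using is_flag_member[OF _ F(2)] unfolding flags_K_def by auto
    from flags_K_member_cases[OF inf F]
    have "\<exists>lam. cocharacter_of (GL_sub U Ut) lam \<and> flag_stabilizer [W] = parabolic lam"
      by (elim disjE) (simp_all add: flag_cocharacter_subspace_of_A[OF inf W(1)]
          flag_cocharacter_superspace_of_B[OF inf W(1)])
    then show ?thesis using W unfolding flags_K_def is_flag_def by simp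
  qed
  moreover have "W \<in> subspaces_K (GL_sub U Ut)" if "[W] \<in> flags_K (GL_sub U Ut)" for W
    using that unfolding subspaces_K_def by (intro CollectI bexI[of _ "[W]"]) simp_all
  ultimately show ?thesis by blast
qed

end
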